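(* Let $G$ be a group and let $X$ and $Y$ be free $G$-spaces. There exists a continuous $G$-equivariant map $F:X*G\to Y$ (with the diagonal action on $X*G$) if and only if there exists a continuous $G$-equivariant map $f:X\to Y$ that is nullhomotopic (i.e. homotopic, through not necessarily equivariant maps, to a constant map).
   Context: The join $X*G$ consists of classes $[x,t,h]$ with $x\in X$, $t\in[0,1]$, $h\in G$ (with $G$ discrete), where $[x,0,h]=[x,0,h']$ for all $h,h'$ and $[x,1,h]=[x',1,h]$ for all $x,x'$; the diagonal action is $g[x,t,h]=[gx,t,gh]$. *)

theory Defs
  imports "HOL-Analysis.Analysis"
begin

text \<open>A (discrete) group is modelled as a type of class group_add (written additively,
  not necessarily commutative).\<close>

definition G_space :: "'a topology \<Rightarrow> ('g::group_add \<Rightarrow> 'a \<Rightarrow> 'a) \<Rightarrow> bool" where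
  "G_space X act \<longleftrightarrow>
     (\<forall>g. continuous_map X X (act g)) \<and>
     (\<forall>x\<in>topspace X. act 0 x = x) \<and>
     (\<forall>g h. \<forall>x\<in>topspace X. act (g + h) x = act g (act h x))"

definition free_G_space :: "'a topology \<Rightarrow> ('g::group_add \<Rightarrow> 'a \<Rightarrow> 'a) \<Rightarrow> bool" where
  "free_G_space X act \<longleftrightarrow> G_space X act \<and>
     (\<forall>g. \<forall>x\<in>topspace X. act g x = x \<longrightarrow> g = 0)"

definition equivariant ::
  "'a topology \<Rightarrow> ('g \<Rightarrow> 'a \<Rightarrow> 'a) \<Rightarrow> ('g \<Rightarrow> 'b \<Rightarrow> 'b) \<Rightarrow> ('a \<Rightarrow> 'b) \<Rightarrow> bool" where
  "equivariant X actX actY f \<longleftrightarrow> (\<forall>g. \<forall>x\<in>topspace X. f (actX g x) = actY g (f x))"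

definition pre_join :: "'a topology \<Rightarrow> ('a \<times> real \<times> 'g) topology" where
  "pre_join X = prod_topology X
     (prod_topology (subtopology euclideanreal {0..1}) (discrete_topology (UNIV :: 'g set)))"

text \<open>The identifications: [x,0,h] = [x,0,h'] and [x,1,h] = [x',1,h].\<close>

definition join_rel :: "'a \<times> real \<times> 'g \<Rightarrow> 'a \<times> real \<times> 'g \<Rightarrow> bool" where
  "join_rel p q \<longleftrightarrow> (case p of (x, t, h) \<Rightarrow> case q of (x', t', h') \<Rightarrow>
     t = t' \<and> ((x = x' \<and> h = h') \<or> (t = 0 \<and> x = x') \<or> (t = 1 \<and> h = h')))"

definition join_class :: "'a topology \<Rightarrow> 'a \<times> real \<times> 'g \<Rightarrow> ('a \<times> real \<times> 'g) set" where
  "join_class X p = {q \<in> topspace (pre_join X). join_rel p q}"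

text \<open>The join X*G with the quotient topology; its points are the equivalence classes.\<close>

definition join_topology :: "'a topology \<Rightarrow> ('a \<times> real \<times> 'g) set topology" where
  "join_topology X = topology (\<lambda>U. U \<subseteq> join_class X ` topspace (pre_join X) \<and>
      openin (pre_join X) {p \<in> topspace (pre_join X). join_class X p \<in> U})"

definition join_act :: "('g::group_add \<Rightarrow> 'a \<Rightarrow> 'a) \<Rightarrow> 'g \<Rightarrow> ('a \<times> real \<times> 'g) set \<Rightarrow> ('a \<times> real \<times> 'g) set" where
  "join_act act g C = (\<lambda>(x, t, h). (act g x, t, g + h)) ` C"

definition nullhomotopic :: "'a topology \<Rightarrow> 'b topology \<Rightarrow> ('a \<Rightarrow> 'b) \<Rightarrow> bool" where
  "nullhomotopic X Y f \<longleftrightarrow> (\<exists>c. homotopic_with (\<lambda>_. True) X Y f (\<lambda>_. c))"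

end

theory Submission
  imports Defs
begin

text \<open>Given an equivariant \<open>F : X*G \<rightarrow> Y\<close>, the restriction \<open>f x = F[x,0,0]\<close> is equivariant
  because all classes \<open>[x,0,h]\<close> agree, and \<open>(t,x) \<mapsto> F[x,t,0]\<close> contracts it to the point
  \<open>F[x,1,0]\<close>, which does not depend on \<open>x\<close>. Conversely, a contraction \<open>H\<close> of an equivariant
  \<open>f\<close> to a point \<open>c\<close> is spread equivariantly over the sheets of \<open>X \<times> [0,1] \<times> G\<close> by
  \<open>(x,t,h) \<mapsto> h\<cdot>H(t, h\<^sup>-\<^sup>1x)\<close>; at \<open>t = 0\<close> equivariance of \<open>f\<close> makes this \<open>f x\<close>, at \<open>t = 1\<close>
  it is \<open>h\<cdot>c\<close>, so it descends to the join.\<close>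

lemma G_space_continuous_map: "G_space X act \<Longrightarrow> continuous_map X X (act g)"
  by (simp add: G_space_def)

lemma G_space_act_in_topspace: "G_space X act \<Longrightarrow> x \<in> topspace X \<Longrightarrow> act g x \<in> topspace X"
  using continuous_map_funspace[OF G_space_continuous_map] by blast

lemma G_space_act_zero: "G_space X act \<Longrightarrow> x \<in> topspace X \<Longrightarrow> act 0 x = x"
  by (simp add: G_space_def)

lemma G_space_act_add:
  "G_space X act \<Longrightarrow> x \<in> topspace X \<Longrightarrow> act (g + h) x = act g (act h x)"
  by (simp add: G_space_def)

lemma G_space_act_minus_act:
  assumes "G_space X act" "x \<in> topspace X"
  shows "act (- g) (act g x) = x"
  using G_space_act_add[OF assms, of "- g" g] G_space_act_zero[OF assms] by simp

lemma G_space_act_act_minus: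
  assumes "G_space X act" "x \<in> topspace X"
  shows "act g (act (- g) x) = x"
  using G_space_act_minus_act[OF assms, of "- g"] by simp

lemma istopology_final:
  "istopology (\<lambda>U. U \<subseteq> f ` topspace X \<and> openin X {x \<in> topspace X. f x \<in> U})"
  unfolding istopology_def
proof (rule conjI; intro allI impI)
  fix S T
  assume "S \<subseteq> f ` topspace X \<and> openin X {x \<in> topspace X. f x \<in> S}"
    and "T \<subseteq> f ` topspace X \<and> openin X {x \<in> topspace X. f x \<in> T}"
  moreover have "{x \<in> topspace X. f x \<in> S \<inter> T} =
      {x \<in> topspace X. f x \<in> S} \<inter> {x \<in> topspace X. f x \<in> T}" by auto
  ultimately show "S \<inter> T \<subseteq> f ` topspace X \<and> openin X {x \<in> topspace X. f x \<in> S \<inter> T}"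
    by (metis (no_types, lifting) le_infI1 openin_Int)
next
  fix K
  assume "\<forall>S\<in>K. S \<subseteq> f ` topspace X \<and> openin X {x \<in> topspace X. f x \<in> S}"
  moreover have "{x \<in> topspace X. f x \<in> \<Union>K} = (\<Union>S\<in>K. {x \<in> topspace X. f x \<in> S})" by auto
  ultimately show "\<Union>K \<subseteq> f ` topspace X \<and> openin X {x \<in> topspace X. f x \<in> \<Union>K}"
    by auto
qed

lemma quotient_map_final:
  "quotient_map X (topology (\<lambda>U. U \<subseteq> f ` topspace X \<and> openin X {x \<in> topspace X. f x \<in> U})) f"
  (is "quotient_map X ?Q f")
proof -
  have openin_Q: "openin ?Q = (\<lambda>U. U \<subseteq> f ` topspace X \<and> openin X {x \<in> topspace X. f x \<in> U})"
    using istopology_final by (rule topology_inverse')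
  have "topspace ?Q = f ` topspace X"
  proof (rule antisym)
    show "topspace ?Q \<subseteq> f ` topspace X"
      using openin_topspace[of ?Q] unfolding openin_Q by blast
    have "openin ?Q (f ` topspace X)"
      unfolding openin_Q by (auto intro: back_subst[where P="openin X", OF openin_topspace])
    then show "f ` topspace X \<subseteq> topspace ?Q"
      by (rule openin_subset)
  qed
  then show ?thesis
    unfolding quotient_map_def openin_Q by auto
qed

lemma topspace_pre_join: "topspace (pre_join X) = topspace X \<times> {0..1} \<times> UNIV"
  by (simp add: pre_join_def)

lemma quotient_map_join_class: "quotient_map (pre_join X) (join_topology X) (join_class X)"
  unfolding join_topology_def by (rule quotient_map_final)

lemma topspace_join_topology: "topspace (join_topology X) = join_class X ` topspace (pre_join X)"
  by (metis quotient_imp_surjective_map quotient_map_join_class)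

lemma continuous_map_join_class: "continuous_map (pre_join X) (join_topology X) (join_class X)"
  using quotient_map_join_class by (rule quotient_imp_continuous_map)

lemma continuous_map_pre_join_level:
  "s \<in> {0..1} \<Longrightarrow> continuous_map X (pre_join X) (\<lambda>x. (x, s, k))"
  unfolding pre_join_def by (intro continuous_map_pairedI) auto

lemma continuous_map_pre_join_sheet:
  "continuous_map (prod_topology (top_of_set {0..1}) X) (pre_join X) (\<lambda>(t, x). (x, t, k))"
  unfolding pre_join_def case_prod_unfold
  by (intro continuous_map_pairedI continuous_map_snd continuous_map_fst) auto

lemma openin_pre_join_sheet: "openin (pre_join X) {p \<in> topspace (pre_join X). snd (snd p) = k}"
proof -
  have "continuous_map (pre_join X) (discrete_topology UNIV) (\<lambda>p. snd (snd p))"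
    unfolding pre_join_def by (intro continuous_map_compose[OF continuous_map_snd continuous_map_snd,
          unfolded o_def])
  from openin_continuous_map_preimage[OF this, of "{k}"] show ?thesis by simp
qed

lemma join_class_level_zero: "join_class X (x, 0, h) = join_class X (x, 0, h')"
  unfolding join_class_def join_rel_def by auto

lemma join_class_level_one: "join_class X (x, 1, h) = join_class X (x', 1, h)"
  unfolding join_class_def join_rel_def by auto

lemma join_rel_if_join_class_eq:
  assumes "q \<in> topspace (pre_join X)" "join_class X p = join_class X q"
  shows "join_rel p q"
proof -
  have "q \<in> join_class X q"
    using assms(1) unfolding join_class_def join_rel_def by auto
  then show ?thesis
    using assms(2) unfolding join_class_def by auto
qed

lemma join_rel_diagonal_act:
  assumes "G_space X act" "x \<in> topspace X" "y \<in> topspace X"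
  shows "join_rel (act g x, t, g + h) (act g y, s, g + k) \<longleftrightarrow> join_rel (x, t, h) (y, s, k)"
proof -
  have "act g x = act g y \<longleftrightarrow> x = y"
    by (metis assms G_space_act_minus_act)
  then show ?thesis
    unfolding join_rel_def by auto
qed

lemma join_act_join_class:
  assumes G: "G_space X act" and x: "x \<in> topspace X"
  shows "join_act act g (join_class X (x, t, h)) = join_class X (act g x, t, g + h)"
proof (intro equalityI subsetI)
  fix p assume "p \<in> join_act act g (join_class X (x, t, h))"
  then obtain y s k where "(y, s, k) \<in> join_class X (x, t, h)" and p: "p = (act g y, s, g + k)"
    unfolding join_act_def by auto
  then show "p \<in> join_class X (act g x, t, g + h)"
    using join_rel_diagonal_act[OF G x] G_space_act_in_topspace[OF G]
    unfolding join_class_def topspace_pre_join by auto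
next
  fix p assume p: "p \<in> join_class X (act g x, t, g + h)"
  obtain y s k where yk: "p = (y, s, k)" by (metis prod_cases3)
  have y: "y \<in> topspace X"
    using p unfolding yk join_class_def topspace_pre_join by auto
  have "join_rel (act g x, t, g + h) (act g (act (- g) y), s, g + (- g + k))"
    using p unfolding yk join_class_def
    by (simp add: G_space_act_act_minus[OF G y] add.assoc[symmetric])
  then have "join_rel (x, t, h) (act (- g) y, s, - g + k)"
    using join_rel_diagonal_act[OF G x G_space_act_in_topspace[OF G y]] by blast
  then have "(act (- g) y, s, - g + k) \<in> join_class X (x, t, h)"
    using p G_space_act_in_topspace[OF G y] unfolding yk join_class_def topspace_pre_join by auto
  moreover have "p = (act g (act (- g) y), s, g + (- g + k))"
    by (simp add: yk G_space_act_act_minus[OF G y] add.assoc[symmetric])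
  ultimately show "p \<in> join_act act g (join_class X (x, t, h))"
    unfolding join_act_def by force
qed

lemma continuous_map_join_restrict:
  fixes F :: "('a \<times> real \<times> 'g::zero) set \<Rightarrow> 'b"
  assumes "continuous_map (join_topology X) Y F"
  shows "continuous_map X Y (\<lambda>x. F (join_class X (x, 0, 0)))"
proof -
  have "continuous_map X (pre_join X) (\<lambda>x. (x, 0, 0 :: 'g))"
    by (simp add: continuous_map_pre_join_level)
  from continuous_map_compose[OF continuous_map_compose[OF this continuous_map_join_class] assms]
  show ?thesis
    by (simp add: o_def)
qed

lemma equivariant_join_restrict:
  assumes G: "G_space X actX" and F: "equivariant (join_topology X) (join_act actX) actY F"
  shows "equivariant X actX actY (\<lambda>x. F (join_class X (x, 0, 0)))"
  unfolding equivariant_def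
proof (intro allI ballI)
  fix g x assume x: "x \<in> topspace X"
  have "join_class X (x, 0, 0) \<in> topspace (join_topology X)"
    using x unfolding topspace_join_topology topspace_pre_join by auto
  then have "F (join_act actX g (join_class X (x, 0, 0))) = actY g (F (join_class X (x, 0, 0)))"
    using F unfolding equivariant_def by blast
  moreover have "join_act actX g (join_class X (x, 0, 0)) = join_class X (actX g x, 0, 0)"
    by (metis join_act_join_class[OF G x] join_class_level_zero)
  ultimately show "F (join_class X (actX g x, 0, 0)) = actY g (F (join_class X (x, 0, 0)))"
    by simp
qed

lemma nullhomotopic_join_restrict:
  assumes F: "continuous_map (join_topology X) Y F"
  shows "nullhomotopic X Y (\<lambda>x. F (join_class X (x, 0, 0)))"
  unfolding nullhomotopic_def
proof (intro exI)
  let ?H = "\<lambda>(t, x). F (join_class X (x, t, 0))"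
  have "continuous_map (prod_topology (top_of_set {0..1}) X) Y ?H"
    using continuous_map_compose[OF continuous_map_compose[OF continuous_map_pre_join_sheet
          continuous_map_join_class] F]
    by (simp add: o_def case_prod_unfold)
  moreover have "?H (1, x) = F (join_class X (undefined, 1, 0))" for x
    using join_class_level_one by (metis case_prod_conv)
  ultimately show "homotopic_with (\<lambda>_. True) X Y (\<lambda>x. F (join_class X (x, 0, 0)))
      (\<lambda>_. F (join_class X (undefined, 1, 0)))"
    by (subst homotopic_with) (auto intro!: exI[of _ ?H])
qed

definition join_lift ::
  "('g::group_add \<Rightarrow> 'a \<Rightarrow> 'a) \<Rightarrow> ('g \<Rightarrow> 'b \<Rightarrow> 'b) \<Rightarrow> (real \<times> 'a \<Rightarrow> 'b) \<Rightarrow> 'a \<times> real \<times> 'g \<Rightarrow> 'b"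
  where "join_lift actX actY H = (\<lambda>(x, t, h). actY h (H (t, actX (- h) x)))"

lemma continuous_map_join_lift:
  assumes GX: "G_space X actX" and GY: "G_space Y actY"
    and H: "continuous_map (prod_topology (top_of_set {0..1}) X) Y H"
  shows "continuous_map (pre_join X) Y (join_lift actX actY H)"
proof (rule pasting_lemma[where I=UNIV and T="\<lambda>k. {p \<in> topspace (pre_join X). snd (snd p) = k}"
      and f="\<lambda>k p. actY k (H (fst (snd p), actX (- k) (fst p)))"])
  fix k
  have "continuous_map (pre_join X) (prod_topology (top_of_set {0..1}) X)
      (\<lambda>p. (fst (snd p), actX (- k) (fst p)))"
    unfolding pre_join_def
    by (intro continuous_map_pairedI continuous_map_compose[OF continuous_map_fst, unfolded o_def]
        continuous_map_compose[OF continuous_map_snd continuous_map_fst, unfolded o_def]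
        continuous_map_compose[OF continuous_map_fst G_space_continuous_map[OF GX], unfolded o_def])
  from continuous_map_compose[OF continuous_map_compose[OF this H] G_space_continuous_map[OF GY]]
  have "continuous_map (pre_join X) Y (\<lambda>p. actY k (H (fst (snd p), actX (- k) (fst p))))"
    by (simp add: o_def)
  then show "continuous_map (subtopology (pre_join X) {p \<in> topspace (pre_join X). snd (snd p) = k}) Y
      (\<lambda>p. actY k (H (fst (snd p), actX (- k) (fst p))))"
    by (rule continuous_map_from_subtopology)
qed (auto simp: openin_pre_join_sheet join_lift_def)

lemma join_lift_level_zero:
  assumes GX: "G_space X actX" and GY: "G_space Y actY"
    and f: "continuous_map X Y f" "equivariant X actX actY f"
    and H0: "\<And>x. x \<in> topspace X \<Longrightarrow> H (0, x) = f x"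
    and x: "x \<in> topspace X"
  shows "join_lift actX actY H (x, 0, h) = f x"
proof -
  have fx: "f x \<in> topspace Y"
    using continuous_map_funspace[OF f(1)] x by blast
  have "join_lift actX actY H (x, 0, h) = actY h (f (actX (- h) x))"
    by (simp add: join_lift_def H0 G_space_act_in_topspace[OF GX x])
  also have "\<dots> = actY h (actY (- h) (f x))"
    using f(2) x unfolding equivariant_def by simp
  also have "\<dots> = f x"
    using G_space_act_act_minus[OF GY fx] .
  finally show ?thesis .
qed

lemma join_lift_respects_join_class:
  assumes GX: "G_space X actX" and GY: "G_space Y actY"
    and f: "continuous_map X Y f" "equivariant X actX actY f"
    and H0: "\<And>x. x \<in> topspace X \<Longrightarrow> H (0, x) = f x"
    and H1: "\<And>x. x \<in> topspace X \<Longrightarrow> H (1, x) = c"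
    and p: "p \<in> topspace (pre_join X)" and q: "q \<in> topspace (pre_join X)"
    and pq: "join_class X p = join_class X q"
  shows "join_lift actX actY H p = join_lift actX actY H q"
proof -
  have level_one: "join_lift actX actY H (x, 1, h) = actY h c" if "x \<in> topspace X" for x h
    using that by (simp add: join_lift_def H1 G_space_act_in_topspace[OF GX])
  obtain x t h y s k where pq_def: "p = (x, t, h)" "q = (y, s, k)"
    by (metis prod_cases3)
  with p q have "x \<in> topspace X" "y \<in> topspace X"
    by (auto simp: topspace_pre_join)
  moreover have "join_rel (x, t, h) (y, s, k)"
    using join_rel_if_join_class_eq[OF q pq] by (simp add: pq_def)
  ultimately show ?thesis
    unfolding pq_def join_rel_def
    using join_lift_level_zero[OF GX GY f H0] level_one by auto
qed

lemma join_lift_diagonal_act: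
  assumes GX: "G_space X actX" and GY: "G_space Y actY"
    and H: "continuous_map (prod_topology (top_of_set {0..1}) X) Y H"
    and x: "x \<in> topspace X" and t: "t \<in> {0..1}"
  shows "join_lift actX actY H (actX g x, t, g + h) = actY g (join_lift actX actY H (x, t, h))"
proof -
  have "actX (- (g + h)) (actX g x) = actX (- h) x"
    using G_space_act_add[OF GX x, of "- (g + h)" g] by (simp add: minus_add add.assoc)
  moreover have "H (t, actX (- h) x) \<in> topspace Y"
    using continuous_map_funspace[OF H] t G_space_act_in_topspace[OF GX x] by auto
  ultimately show ?thesis
    by (simp add: join_lift_def G_space_act_add[OF GY])
qed

lemma nullhomotopic_equivariant_extends_to_join:
  fixes actX :: "'g::group_add \<Rightarrow> 'a \<Rightarrow> 'a"
  assumes GX: "G_space X actX" and GY: "G_space Y actY"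
    and f: "continuous_map X Y f" "equivariant X actX actY f" "nullhomotopic X Y f"
  obtains F where "continuous_map (join_topology X) Y F"
    "equivariant (join_topology X) (join_act actX) actY F"
proof -
  obtain c where "homotopic_with (\<lambda>_. True) X Y f (\<lambda>_. c)"
    using f(3) unfolding nullhomotopic_def by blast
  then obtain H where H: "continuous_map (prod_topology (top_of_set {0..1::real}) X) Y H"
    and H0: "\<And>x. x \<in> topspace X \<Longrightarrow> H (0, x) = f x"
    and H1: "\<And>x. x \<in> topspace X \<Longrightarrow> H (1, x) = c"
    by (subst (asm) homotopic_with) auto
  obtain F where F: "continuous_map (join_topology X) Y F"
    and Fq: "\<And>p. p \<in> topspace (pre_join X) \<Longrightarrow> F (join_class X p) = join_lift actX actY H p"
    using quotient_map_lift_exists[OF quotient_map_join_class continuous_map_join_lift[OF GX GY H]]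
      join_lift_respects_join_class[OF GX GY f(1,2) H0 H1] by metis
  have "equivariant (join_topology X) (join_act actX) actY F"
    unfolding equivariant_def topspace_join_topology topspace_pre_join
  proof (intro allI ballI, elim imageE)
    fix g and C :: "('a \<times> real \<times> 'g) set" and p assume "p \<in> topspace X \<times> {0..1} \<times> UNIV" and C: "C = join_class X p"
    then obtain x t h where p: "p = (x, t, h)" and x: "x \<in> topspace X" and t: "t \<in> {0..1}"
      by auto
    have "F (join_act actX g C) = F (join_class X (actX g x, t, g + h))"
      by (simp add: C p join_act_join_class[OF GX x])
    also have "\<dots> = actY g (join_lift actX actY H (x, t, h))"
      using Fq G_space_act_in_topspace[OF GX x] t join_lift_diagonal_act[OF GX GY H x t]
      by (simp add: topspace_pre_join)
    also have "\<dots> = actY g (F C)"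
      using Fq x t by (simp add: C p topspace_pre_join)
    finally show "F (join_act actX g C) = actY g (F C)" .
  qed
  with F show ?thesis using that by blast
qed

theorem lemma4p1:
  fixes X :: "'a topology" and Y :: "'b topology"
    and actX :: "'g::group_add \<Rightarrow> 'a \<Rightarrow> 'a" and actY :: "'g \<Rightarrow> 'b \<Rightarrow> 'b"
  assumes "free_G_space X actX" and "free_G_space Y actY"
  shows "(\<exists>F. continuous_map (join_topology X) Y F \<and>
              equivariant (join_topology X) (join_act actX) actY F)
     \<longleftrightarrow> (\<exists>f. continuous_map X Y f \<and> equivariant X actX actY f \<and> nullhomotopic X Y f)"
proof -
  have GX: "G_space X actX" and GY: "G_space Y actY"
    using assms unfolding free_G_space_def by auto
  show ?thesis
  proof
    assume "\<exists>F. continuous_map (join_topology X) Y F \<and>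
              equivariant (join_topology X) (join_act actX) actY F"
    then obtain F where "continuous_map (join_topology X) Y F"
      "equivariant (join_topology X) (join_act actX) actY F" by blast
    then show "\<exists>f. continuous_map X Y f \<and> equivariant X actX actY f \<and> nullhomotopic X Y f"
      using continuous_map_join_restrict equivariant_join_restrict[OF GX]
        nullhomotopic_join_restrict by blast
  next
    assume "\<exists>f. continuous_map X Y f \<and> equivariant X actX actY f \<and> nullhomotopic X Y f"
    then show "\<exists>F. continuous_map (join_topology X) Y F \<and>
              equivariant (join_topology X) (join_act actX) actY F"
      using nullhomotopic_equivariant_extends_to_join[OF GX GY] by blast
  qed
qed

end
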